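(* Let $q\geq 5$ and $n\geq 1$ be integers, and let $c>0$ be a real number such that $k=\frac{n(q-1)}{2q}\bigl(\log (n(q-1))+c\bigr)$ is an integer. Then $$\Vert \nu_n^{*k}-\pi_n\Vert_{TV}^2\leq \frac14\left(e^{e^{-c}}-1\right).$$
   Context: For integers $n\geq1$, $q\geq2$, the Hamming scheme $H(n,q)$ is the graph with vertex set $X_n=\{0,1,\dots,q-1\}^n$ in which $x=(x_1,\dots,x_n)$ and $x'=(x'_1,\dots,x'_n)$ are adjacent ($x\sim x'$) iff $d(x,x'):=\#\{j: x_j\neq x'_j\}=1$. The simple random walk has transition probability $p_n(x,x')=\frac{1}{n(q-1)}$ if $x\sim x'$ and $0$ otherwise. Let $p_n^{(0)}(x,x')=\delta_{x,x'}$, $p_n^{(k)}(x,x')=\sum_{y\in X_n}p_n^{(k-1)}(x,y)p_n(y,x')$, let $x^{(0)}=(0,\dots,0)$, and let $\nu_n^{*k}(x)=p_n^{(k)}(x^{(0)},x)$ be the $k$-step distribution started at $x^{(0)}$. $\pi_n$ is the uniform probability measure on $X_n$. For measures $\mu,\nu$ on $X_n$, $\Vert\mu-\nu\Vert_{TV}=\max_{S\subset X_n}|\mu(S)-\nu(S)|$. *)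

theory Defs
  imports Complex_Main
begin

definition hamming_space :: "nat \<Rightarrow> nat \<Rightarrow> nat list set" where
  "hamming_space n q = {x. length x = n \<and> (\<forall>i<n. x ! i < q)}"

definition hdist :: "nat list \<Rightarrow> nat list \<Rightarrow> nat" where
  "hdist x y = card {j. j < length x \<and> x ! j \<noteq> y ! j}"

definition trans_p :: "nat \<Rightarrow> nat \<Rightarrow> nat list \<Rightarrow> nat list \<Rightarrow> real" where
  "trans_p n q x y = (if hdist x y = 1 then 1 / (real n * (real q - 1)) else 0)"

fun trans_pk :: "nat \<Rightarrow> nat \<Rightarrow> nat \<Rightarrow> nat list \<Rightarrow> nat list \<Rightarrow> real" where
  "trans_pk n q 0 x y = (if x = y then 1 else 0)"
| "trans_pk n q (Suc k) x y =
     (\<Sum>z\<in>hamming_space n q. trans_pk n q k x z * trans_p n q z y)"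

definition nu_k :: "nat \<Rightarrow> nat \<Rightarrow> nat \<Rightarrow> nat list \<Rightarrow> real" where
  "nu_k n q k x = trans_pk n q k (replicate n 0) x"

definition unif :: "nat \<Rightarrow> nat \<Rightarrow> nat list \<Rightarrow> real" where
  "unif n q x = 1 / real q ^ n"

definition tv_dist :: "nat \<Rightarrow> nat \<Rightarrow> (nat list \<Rightarrow> real) \<Rightarrow> (nat list \<Rightarrow> real) \<Rightarrow> real" where
  "tv_dist n q \<mu> \<nu> = Max {\<bar>sum \<mu> S - sum \<nu> S\<bar> | S. S \<subseteq> hamming_space n q}"

end

theory Submission
  imports Defs "HOL-Analysis.Convex"
begin

text \<open>
  The point mass at the zero word decomposes into product functions indexed by the subsets
  \<open>S\<close> of the coordinates; each is an eigenfunction of the walk with eigenvalue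
  \<open>1 - q j / (n (q - 1))\<close>, \<open>j = n - |S|\<close>, and they are mutually orthogonal.
  Bounding total variation by half the \<open>\<ell>\<^sup>1\<close> distance and that by Cauchy-Schwarz,
  Parseval reduces the claim to \<open>\<Sum>\<^sub>j C(n,j) (q-1)\<^sup>j \<lambda>\<^sub>j\<^sup>2\<^sup>k \<le> exp (e\<^sup>-\<^sup>c) - 1\<close>.
  For \<open>q \<ge> 5\<close> every eigenvalue satisfies \<open>|\<lambda>\<^sub>j| \<le> exp (- q j / (n (q - 1)))\<close>, so
  the choice of \<open>k\<close> makes the \<open>j\<close>-th term at most \<open>C(n,j) (e\<^sup>-\<^sup>c / n)\<^sup>j\<close>, and the
  binomial theorem with \<open>1 + x \<le> e\<^sup>x\<close> finishes the proof.
\<close>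

lemma hamming_space_0: "hamming_space 0 q = {[]}"
  by (auto simp: hamming_space_def)

lemma hamming_space_Suc:
  "hamming_space (Suc n) q = (\<lambda>(v, xs). v # xs) ` ({..<q} \<times> hamming_space n q)"
proof (rule set_eqI, rule iffI)
  fix x assume "x \<in> hamming_space (Suc n) q"
  then obtain y ys where x: "x = y # ys" "length ys = n" and h: "\<forall>i<Suc n. x ! i < q"
    by (auto simp: hamming_space_def length_Suc_conv)
  have "y < q" using h[rule_format, of 0] x by simp
  moreover have "\<forall>i<n. ys ! i < q" using h x by auto
  ultimately show "x \<in> (\<lambda>(v, xs). v # xs) ` ({..<q} \<times> hamming_space n q)"
    using x by (auto simp: hamming_space_def)
next
  fix x assume "x \<in> (\<lambda>(v, xs). v # xs) ` ({..<q} \<times> hamming_space n q)"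
  then show "x \<in> hamming_space (Suc n) q"
    by (auto simp: hamming_space_def nth_Cons split: nat.splits)
qed

lemma finite_hamming_space: "finite (hamming_space n q)"
proof -
  have "hamming_space n q \<subseteq> {xs. set xs \<subseteq> {..<q} \<and> length xs = n}"
    by (auto simp: hamming_space_def in_set_conv_nth)
  then show ?thesis using finite_lists_length_eq[of "{..<q}" n] finite_subset by blast
qed

lemma sum_hamming_space_prod:
  "(\<Sum>x\<in>hamming_space n q. \<Prod>i<n. f i (x ! i)) = (\<Prod>i<n. \<Sum>v<q. (f i v :: real))"
proof (induction n arbitrary: f)
  case 0
  then show ?case by (simp add: hamming_space_0)
next
  case (Suc n)
  have inj: "inj_on (\<lambda>(v, xs). v # xs) ({..<q} \<times> hamming_space n q)"
    by (auto simp: inj_on_def)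
  have "(\<Sum>x\<in>hamming_space (Suc n) q. \<Prod>i<Suc n. f i (x ! i))
      = (\<Sum>(v, xs)\<in>{..<q} \<times> hamming_space n q. \<Prod>i<Suc n. f i ((v # xs) ! i))"
    unfolding hamming_space_Suc by (subst sum.reindex[OF inj]) (simp add: case_prod_beta')
  also have "\<dots> = (\<Sum>v<q. \<Sum>xs\<in>hamming_space n q. f 0 v * (\<Prod>i<n. f (Suc i) (xs ! i)))"
    by (subst sum.cartesian_product[symmetric])
      (simp add: prod.lessThan_Suc_shift del: prod.lessThan_Suc)
  also have "\<dots> = (\<Sum>v<q. f 0 v) * (\<Sum>xs\<in>hamming_space n q. \<Prod>i<n. f (Suc i) (xs ! i))"
    by (simp add: sum_product)
  also have "\<dots> = (\<Prod>i<Suc n. \<Sum>v<q. f i v)"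
    using Suc.IH[of "\<lambda>i. f (Suc i)"] by (simp add: prod.lessThan_Suc_shift del: prod.lessThan_Suc)
  finally show ?case .
qed

lemma card_hamming_space: "card (hamming_space n q) = q ^ n"
proof -
  have "real (card (hamming_space n q)) = (\<Sum>x\<in>hamming_space n q. \<Prod>i<n. (\<lambda>i v. 1::real) i (x ! i))"
    by simp
  also have "\<dots> = real q ^ n" by (subst sum_hamming_space_prod) simp
  finally show ?thesis by (metis of_nat_eq_of_nat_power_cancel_iff)
qed

lemma prod_indicator: "(\<Prod>j<(n::nat). if P j then 1 else 0 :: real) = (if \<forall>j<n. P j then 1 else 0)"
  by (induction n) (auto simp: less_Suc_eq)

definition eigen_factor :: "nat \<Rightarrow> nat set \<Rightarrow> nat \<Rightarrow> nat \<Rightarrow> real" where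
  "eigen_factor q S i v = (if i \<in> S then 1 / real q else (if v = 0 then 1 else 0) - 1 / real q)"

definition eigenfunction :: "nat \<Rightarrow> nat \<Rightarrow> nat set \<Rightarrow> nat list \<Rightarrow> real" where
  "eigenfunction n q S x = (\<Prod>i<n. eigen_factor q S i (x ! i))"

definition eigenvalue :: "nat \<Rightarrow> nat \<Rightarrow> nat set \<Rightarrow> real" where
  "eigenvalue n q S = 1 - real q * real (n - card S) / (real n * (real q - 1))"

text \<open>\<open>\<Prod>\<^sub>j single_diff_factor y i j (z ! j)\<close> is the indicator that \<open>z\<close> and \<open>y\<close>
  differ exactly in coordinate \<open>i\<close>.\<close>
definition single_diff_factor :: "nat list \<Rightarrow> nat \<Rightarrow> nat \<Rightarrow> nat \<Rightarrow> real" where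
  "single_diff_factor y i j v = (if j = i then (if v \<noteq> y ! j then 1 else 0) else (if v = y ! j then 1 else 0))"

lemma hdist_eq_1_indicator:
  assumes "length z = n"
  shows "(if hdist z y = 1 then 1 else 0 :: real) = (\<Sum>i<n. \<Prod>j<n. single_diff_factor y i j (z ! j))"
proof -
  define D where "D = {j. j < n \<and> z ! j \<noteq> y ! j}"
  have hd: "hdist z y = card D" using assms by (simp add: hdist_def D_def)
  have single: "(\<Prod>j<n. single_diff_factor y i j (z ! j)) = (if D = {i} then 1 else 0)" if "i < n" for i
  proof -
    have "(\<Prod>j<n. single_diff_factor y i j (z ! j)) = (\<Prod>j<n. if (j = i \<longleftrightarrow> z ! j \<noteq> y ! j) then 1 else 0)"
      by (rule prod.cong) (auto simp: single_diff_factor_def)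
    also have "\<dots> = (if \<forall>j<n. (j = i \<longleftrightarrow> z ! j \<noteq> y ! j) then 1 else 0)" by (rule prod_indicator)
    also have "(\<forall>j<n. (j = i \<longleftrightarrow> z ! j \<noteq> y ! j)) \<longleftrightarrow> D = {i}"
      using that by (auto simp: D_def)
    finally show ?thesis .
  qed
  have "(\<Sum>i<n. \<Prod>j<n. single_diff_factor y i j (z ! j)) = (\<Sum>i<n. if D = {i} then 1 else 0)"
    by (rule sum.cong) (auto simp: single)
  also have "\<dots> = (if card D = 1 then 1 else 0)"
  proof (cases "card D = 1")
    case True
    then obtain a where a: "D = {a}" by (auto simp: card_Suc_eq)
    then have "a < n" by (auto simp: D_def)
    then show ?thesis using a True by (simp add: sum.delta')
  next
    case False
    then show ?thesis by (auto intro!: sum.neutral)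
  qed
  finally show ?thesis by (simp add: hd)
qed

lemma sum_eigen_factor: "q \<ge> 1 \<Longrightarrow> (\<Sum>v<q. eigen_factor q S i v) = (if i \<in> S then 1 else 0)"
  by (simp add: eigen_factor_def sum.distrib sum_subtractf)

lemma sum_eigen_factor_times_single_diff:
  assumes q: "q \<ge> 2" and yi: "y ! i < q"
  shows "(\<Sum>v<q. eigen_factor q S i v * single_diff_factor y i i v)
    = (if i \<in> S then 1 else 0) - eigen_factor q S i (y ! i)"
proof -
  have "(\<Sum>v<q. eigen_factor q S i v * single_diff_factor y i i v)
      = (\<Sum>v<q. eigen_factor q S i v - (if v = y ! i then eigen_factor q S i v else 0))"
    by (rule sum.cong) (auto simp: single_diff_factor_def)
  also have "\<dots> = (\<Sum>v<q. eigen_factor q S i v) - eigen_factor q S i (y ! i)"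
    using yi by (simp add: sum_subtractf sum.delta')
  finally show ?thesis using q by (simp add: sum_eigen_factor)
qed

lemma prod_sum_eigen_factor_times_single_diff:
  assumes q: "q \<ge> 2" and y: "y \<in> hamming_space n q" and i: "i < n"
  shows "(\<Prod>j<n. \<Sum>v<q. eigen_factor q S j v * single_diff_factor y i j v)
    = (if i \<in> S then real q * eigenfunction n q S y else 0) - eigenfunction n q S y"
proof -
  have yq: "\<And>j. j < n \<Longrightarrow> y ! j < q" using y by (auto simp: hamming_space_def)
  define R where "R = (\<Prod>j\<in>{..<n}-{i}. eigen_factor q S j (y ! j))"
  have ef: "eigenfunction n q S y = eigen_factor q S i (y ! i) * R"
    unfolding eigenfunction_def R_def using i by (simp add: prod.remove)
  have other: "(\<Sum>v<q. eigen_factor q S j v * single_diff_factor y i j v) = eigen_factor q S j (y ! j)"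
    if "j < n" "j \<noteq> i" for j
    using that yq[OF that(1)] by (simp add: single_diff_factor_def if_distrib sum.delta' cong: if_cong)
  have "(\<Prod>j<n. \<Sum>v<q. eigen_factor q S j v * single_diff_factor y i j v)
      = (\<Sum>v<q. eigen_factor q S i v * single_diff_factor y i i v)
        * (\<Prod>j\<in>{..<n}-{i}. \<Sum>v<q. eigen_factor q S j v * single_diff_factor y i j v)"
    using i by (simp add: prod.remove)
  also have "(\<Prod>j\<in>{..<n}-{i}. \<Sum>v<q. eigen_factor q S j v * single_diff_factor y i j v) = R"
    unfolding R_def by (rule prod.cong) (auto simp: other)
  finally have prod_eq: "(\<Prod>j<n. \<Sum>v<q. eigen_factor q S j v * single_diff_factor y i j v)
      = ((if i \<in> S then 1 else 0) - eigen_factor q S i (y ! i)) * R"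
    using sum_eigen_factor_times_single_diff[OF q yq[OF i]] by simp
  show ?thesis
  proof (cases "i \<in> S")
    case True
    then have "eigen_factor q S i (y ! i) = 1 / real q" by (simp add: eigen_factor_def)
    then show ?thesis using prod_eq ef True q by (simp add: field_simps)
  next
    case False
    then show ?thesis using prod_eq ef by simp
  qed
qed

lemma eigenfunction_trans_p:
  assumes q: "q \<ge> 2" and n: "n \<ge> 1" and S: "S \<subseteq> {..<n}" and y: "y \<in> hamming_space n q"
  shows "(\<Sum>z\<in>hamming_space n q. eigenfunction n q S z * trans_p n q z y)
    = eigenvalue n q S * eigenfunction n q S y"
proof -
  define N where "N = real n * (real q - 1)"
  have N: "N > 0" using q n by (simp add: N_def)
  have tp: "trans_p n q z y = (1 / N) * (\<Sum>i<n. \<Prod>j<n. single_diff_factor y i j (z ! j))"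
    if "z \<in> hamming_space n q" for z
  proof -
    have "length z = n" using that by (simp add: hamming_space_def)
    moreover have "trans_p n q z y = (1 / N) * (if hdist z y = 1 then 1 else 0)"
      by (simp add: trans_p_def N_def)
    ultimately show ?thesis using hdist_eq_1_indicator[of z n y] by simp
  qed
  have "(\<Sum>z\<in>hamming_space n q. eigenfunction n q S z * trans_p n q z y)
      = (1 / N) * (\<Sum>i<n. \<Sum>z\<in>hamming_space n q.
          \<Prod>j<n. eigen_factor q S j (z ! j) * single_diff_factor y i j (z ! j))"
    by (simp add: tp eigenfunction_def sum_distrib_left sum_distrib_right prod.distrib
        sum.swap[of _ "{..<n}"] mult_ac)
  also have "\<dots> = (1 / N) * (\<Sum>i<n. \<Prod>j<n. \<Sum>v<q. eigen_factor q S j v * single_diff_factor y i j v)"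
    by (simp add: sum_hamming_space_prod[where f = "\<lambda>j v. eigen_factor q S j v * single_diff_factor y _ j v"])
  also have "\<dots> = (1 / N) * (\<Sum>i<n. (if i \<in> S then real q * eigenfunction n q S y else 0)
      - eigenfunction n q S y)"
    using prod_sum_eigen_factor_times_single_diff[OF q y] by simp
  also have "\<dots> = (1 / N) * ((real q * real (card S) - real n) * eigenfunction n q S y)"
    using S by (simp add: sum_subtractf sum.If_cases Int_absorb1 algebra_simps)
  also have "\<dots> = eigenvalue n q S * eigenfunction n q S y"
  proof -
    have "real (n - card S) = real n - real (card S)"
      using card_mono[OF _ S] by (simp add: of_nat_diff)
    then have "eigenvalue n q S = (N - real q * (real n - real (card S))) / N"
      using N q n unfolding eigenvalue_def N_def by (simp add: diff_divide_distrib)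
    also have "N - real q * (real n - real (card S)) = real q * real (card S) - real n"
      by (simp add: N_def algebra_simps)
    finally show ?thesis by simp
  qed
  finally show ?thesis .
qed

lemma sum_eigenfunction_subsets:
  assumes x: "x \<in> hamming_space n q"
  shows "(\<Sum>S\<in>Pow {..<n}. eigenfunction n q S x) = (if x = replicate n 0 then 1 else 0)"
proof -
  define f1 where "f1 = (\<lambda>i::nat. 1 / real q)"
  define f2 where "f2 = (\<lambda>i. (if x ! i = 0 then 1 else 0) - 1 / real q)"
  have "(\<Sum>S\<in>Pow {..<n}. eigenfunction n q S x)
      = (\<Sum>S\<in>Pow {..<n}. (\<Prod>i\<in>S. f1 i) * (\<Prod>i\<in>{..<n}-S. f2 i))"
  proof (rule sum.cong)
    fix S assume "S \<in> Pow {..<n}"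
    then have S: "S \<subseteq> {..<n}" by simp
    have "eigenfunction n q S x
        = (\<Prod>i\<in>{..<n}-S. eigen_factor q S i (x ! i)) * (\<Prod>i\<in>S. eigen_factor q S i (x ! i))"
      unfolding eigenfunction_def using prod.subset_diff[OF S] by simp
    also have "(\<Prod>i\<in>{..<n}-S. eigen_factor q S i (x ! i)) = (\<Prod>i\<in>{..<n}-S. f2 i)"
      by (rule prod.cong) (auto simp: eigen_factor_def f2_def)
    also have "(\<Prod>i\<in>S. eigen_factor q S i (x ! i)) = (\<Prod>i\<in>S. f1 i)"
      by (rule prod.cong) (auto simp: eigen_factor_def f1_def)
    finally show "eigenfunction n q S x = (\<Prod>i\<in>S. f1 i) * (\<Prod>i\<in>{..<n}-S. f2 i)" by simp
  qed simp
  also have "\<dots> = (\<Prod>i<n. f1 i + f2 i)" by (rule prod_add[symmetric]) simp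
  also have "\<dots> = (\<Prod>i<n. if x ! i = 0 then 1 else 0)" by (simp add: f1_def f2_def)
  also have "\<dots> = (if \<forall>i<n. x ! i = 0 then 1 else 0)" by (rule prod_indicator)
  also have "(\<forall>i<n. x ! i = 0) \<longleftrightarrow> x = replicate n 0"
    using x by (auto simp: hamming_space_def list_eq_iff_nth_eq)
  finally show ?thesis .
qed

lemma nu_k_eq_sum_eigenfunction:
  assumes q: "q \<ge> 2" and n: "n \<ge> 1" and x: "x \<in> hamming_space n q"
  shows "nu_k n q k x = (\<Sum>S\<in>Pow {..<n}. eigenvalue n q S ^ k * eigenfunction n q S x)"
  using x
proof (induction k arbitrary: x)
  case 0
  then show ?case using sum_eigenfunction_subsets[OF 0] by (simp add: nu_k_def eq_commute)
next
  case (Suc k)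
  have "nu_k n q (Suc k) x = (\<Sum>z\<in>hamming_space n q. nu_k n q k z * trans_p n q z x)"
    by (simp add: nu_k_def)
  also have "\<dots> = (\<Sum>z\<in>hamming_space n q.
      (\<Sum>S\<in>Pow {..<n}. eigenvalue n q S ^ k * eigenfunction n q S z) * trans_p n q z x)"
    by (rule sum.cong) (auto simp: Suc.IH)
  also have "\<dots> = (\<Sum>S\<in>Pow {..<n}. eigenvalue n q S ^ k
      * (\<Sum>z\<in>hamming_space n q. eigenfunction n q S z * trans_p n q z x))"
    by (simp add: sum_distrib_left sum_distrib_right sum.swap[of _ "Pow {..<n}"] mult_ac)
  also have "\<dots> = (\<Sum>S\<in>Pow {..<n}. eigenvalue n q S ^ Suc k * eigenfunction n q S x)"
    by (rule sum.cong) (auto simp: eigenfunction_trans_p[OF q n _ Suc.prems])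
  finally show ?case .
qed

lemma nu_k_minus_unif_eq_sum_eigenfunction:
  assumes q: "q \<ge> 2" and n: "n \<ge> 1" and x: "x \<in> hamming_space n q"
  shows "nu_k n q k x - unif n q x
    = (\<Sum>S\<in>Pow {..<n} - {{..<n}}. eigenvalue n q S ^ k * eigenfunction n q S x)"
proof -
  have "eigenfunction n q {..<n} x = unif n q x"
    by (simp add: eigenfunction_def eigen_factor_def unif_def power_one_over)
  moreover have "eigenvalue n q {..<n} = 1" by (simp add: eigenvalue_def)
  ultimately show ?thesis
    using nu_k_eq_sum_eigenfunction[OF q n x] by (simp add: sum.remove[of "Pow {..<n}" "{..<n}"])
qed

lemma sum_eigenfunction_eq_0:
  assumes q: "q \<ge> 2" and S: "S \<subseteq> {..<n}" "S \<noteq> {..<n}"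
  shows "(\<Sum>x\<in>hamming_space n q. eigenfunction n q S x) = 0"
proof -
  obtain i where i: "i < n" "i \<notin> S" using S by auto
  have "(\<Sum>x\<in>hamming_space n q. eigenfunction n q S x) = (\<Prod>i<n. \<Sum>v<q. eigen_factor q S i v)"
    unfolding eigenfunction_def by (rule sum_hamming_space_prod)
  also have "\<dots> = 0" using i q by (auto simp: sum_eigen_factor intro!: prod_zero)
  finally show ?thesis .
qed

lemma sum_nu_k_minus_unif:
  assumes q: "q \<ge> 2" and n: "n \<ge> 1"
  shows "(\<Sum>x\<in>hamming_space n q. nu_k n q k x - unif n q x) = 0"
proof -
  have "(\<Sum>x\<in>hamming_space n q. nu_k n q k x - unif n q x)
      = (\<Sum>x\<in>hamming_space n q. \<Sum>S\<in>Pow {..<n} - {{..<n}}. eigenvalue n q S ^ k * eigenfunction n q S x)"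
    by (rule sum.cong) (simp_all add: nu_k_minus_unif_eq_sum_eigenfunction[OF q n])
  also have "\<dots> = (\<Sum>S\<in>Pow {..<n} - {{..<n}}.
      eigenvalue n q S ^ k * (\<Sum>x\<in>hamming_space n q. eigenfunction n q S x))"
    by (simp add: sum.swap[of _ "hamming_space n q"] sum_distrib_left)
  also have "\<dots> = 0" by (rule sum.neutral) (auto simp: sum_eigenfunction_eq_0[OF q])
  finally show ?thesis .
qed

lemma sum_eigen_factor_mult:
  assumes q: "q \<ge> 2"
  shows "(\<Sum>v<q. eigen_factor q S i v * eigen_factor q T i v) =
    (if i \<in> S \<and> i \<in> T then 1 / real q
     else if i \<notin> S \<and> i \<notin> T then (real q - 1) / real q else 0)"
proof -
  have "(\<Sum>v<q. ((if v = 0 then 1 else 0) - 1 / real q) * ((if v = 0 then 1 else 0) - 1 / real q))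
      = (\<Sum>v<q. (if v = 0 then 1 - 2 / real q else 0) + 1 / real q ^ 2)"
    by (rule sum.cong) (auto simp: field_simps power2_eq_square)
  also have "\<dots> = (1 - 2 / real q) + real q * (1 / real q ^ 2)"
    using q by (simp add: sum.distrib)
  also have "\<dots> = (real q - 1) / real q"
    using q by (simp add: field_simps power2_eq_square)
  finally have diag: "(\<Sum>v<q. ((if v = 0 then 1 else 0) - 1 / real q) * ((if v = 0 then 1 else 0) - 1 / real q))
      = (real q - 1) / real q" .
  have in_S: "(\<Sum>v<q. eigen_factor q S i v * eigen_factor q T i v) = (if i \<in> T then 1 / real q else 0)"
    if "i \<in> S"
  proof -
    have "(\<Sum>v<q. eigen_factor q S i v * eigen_factor q T i v) = (1 / real q) * (\<Sum>v<q. eigen_factor q T i v)"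
      using that by (simp add: eigen_factor_def sum_distrib_left)
    then show ?thesis using q by (simp add: sum_eigen_factor)
  qed
  have in_T: "(\<Sum>v<q. eigen_factor q S i v * eigen_factor q T i v) = (if i \<in> S then 1 / real q else 0)"
    if "i \<in> T"
  proof -
    have "(\<Sum>v<q. eigen_factor q S i v * eigen_factor q T i v) = (1 / real q) * (\<Sum>v<q. eigen_factor q S i v)"
      using that by (simp add: eigen_factor_def sum_distrib_left mult.commute)
    then show ?thesis using q by (simp add: sum_eigen_factor)
  qed
  show ?thesis
  proof (cases "i \<in> S \<or> i \<in> T")
    case True
    then show ?thesis using in_S in_T by auto
  next
    case False
    then show ?thesis using diag by (simp add: eigen_factor_def)
  qed
qed

lemma sum_eigenfunction_mult:
  assumes q: "q \<ge> 2" and S: "S \<subseteq> {..<n}" and T: "T \<subseteq> {..<n}"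
  shows "(\<Sum>x\<in>hamming_space n q. eigenfunction n q S x * eigenfunction n q T x) =
    (if S = T then (1 / real q) ^ card S * ((real q - 1) / real q) ^ (n - card S) else 0)"
proof -
  have "(\<Sum>x\<in>hamming_space n q. eigenfunction n q S x * eigenfunction n q T x)
      = (\<Prod>i<n. \<Sum>v<q. eigen_factor q S i v * eigen_factor q T i v)"
    unfolding eigenfunction_def prod.distrib[symmetric]
    by (rule sum_hamming_space_prod[where f = "\<lambda>i v. eigen_factor q S i v * eigen_factor q T i v"])
  also have "\<dots> = (\<Prod>i<n. if i \<in> S \<and> i \<in> T then 1 / real q
      else if i \<notin> S \<and> i \<notin> T then (real q - 1) / real q else 0)"
    using sum_eigen_factor_mult[OF q] by simp
  also have "\<dots> = (if S = T then (1 / real q) ^ card S * ((real q - 1) / real q) ^ (n - card S) else 0)"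
  proof (cases "S = T")
    case True
    have "card ({..<n} \<inter> - S) = n - card S"
      using S by (simp add: Diff_eq[symmetric] card_Diff_subset finite_subset)
    moreover have "card ({..<n} \<inter> S) = card S" using S by (simp add: Int_absorb1)
    ultimately show ?thesis using True by (simp add: prod.If_cases)
  next
    case False
    then obtain i where "i < n" "(i \<in> S) \<noteq> (i \<in> T)" using S T by blast
    then show ?thesis using False by (auto intro!: prod_zero)
  qed
  finally show ?thesis .
qed

lemma sum_square_sum_eigenfunction:
  assumes q: "q \<ge> 2" and P: "P \<subseteq> Pow {..<n}"
  shows "(\<Sum>x\<in>hamming_space n q. (\<Sum>S\<in>P. a S * eigenfunction n q S x)\<^sup>2)
    = (\<Sum>S\<in>P. (a S)\<^sup>2 * ((1 / real q) ^ card S * ((real q - 1) / real q) ^ (n - card S)))"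
proof -
  have fP: "finite P" using P finite_subset by blast
  have "(\<Sum>x\<in>hamming_space n q. (\<Sum>S\<in>P. a S * eigenfunction n q S x)\<^sup>2)
      = (\<Sum>S\<in>P. \<Sum>T\<in>P. a S * a T
          * (\<Sum>x\<in>hamming_space n q. eigenfunction n q S x * eigenfunction n q T x))"
    by (simp add: power2_eq_square sum_product sum_distrib_left sum.swap[of _ "hamming_space n q"] mult_ac)
  also have "\<dots> = (\<Sum>S\<in>P. \<Sum>T\<in>P. a S * a T * (if S = T
      then (1 / real q) ^ card S * ((real q - 1) / real q) ^ (n - card S) else 0))"
    using P by (intro sum.cong refl, subst sum_eigenfunction_mult[OF q]) auto
  also have "\<dots> = (\<Sum>S\<in>P. (a S)\<^sup>2 * ((1 / real q) ^ card S * ((real q - 1) / real q) ^ (n - card S)))"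
    using fP by (simp add: if_distrib power2_eq_square sum.delta cong: if_cong)
  finally show ?thesis .
qed

lemma abs_sum_subset_le_half_sum_abs:
  fixes f :: "'a \<Rightarrow> real"
  assumes X: "finite X" and zero: "sum f X = 0" and B: "B \<subseteq> X"
  shows "\<bar>sum f B\<bar> \<le> (\<Sum>x\<in>X. \<bar>f x\<bar>) / 2"
proof -
  have pos_neg: "(\<Sum>x\<in>X. max (f x) 0) = (\<Sum>x\<in>X. max (- f x) 0)"
  proof -
    have "(\<Sum>x\<in>X. max (f x) 0) - (\<Sum>x\<in>X. max (- f x) 0) = sum f X"
      by (simp add: sum_subtractf[symmetric]) (rule sum.cong, auto)
    then show ?thesis using zero by simp
  qed
  have abs_split: "(\<Sum>x\<in>X. \<bar>f x\<bar>) = (\<Sum>x\<in>X. max (f x) 0) + (\<Sum>x\<in>X. max (- f x) 0)"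
    by (simp add: sum.distrib[symmetric]) (rule sum.cong, auto)
  have "sum f B \<le> (\<Sum>x\<in>B. max (f x) 0)" by (rule sum_mono) simp
  also have "\<dots> \<le> (\<Sum>x\<in>X. max (f x) 0)" by (rule sum_mono2[OF X B]) simp
  finally have upper: "sum f B \<le> (\<Sum>x\<in>X. max (f x) 0)" .
  have "- sum f B \<le> (\<Sum>x\<in>B. max (- f x) 0)"
    by (simp add: sum_negf[symmetric]) (rule sum_mono, simp)
  also have "\<dots> \<le> (\<Sum>x\<in>X. max (- f x) 0)" by (rule sum_mono2[OF X B]) simp
  finally have lower: "- sum f B \<le> (\<Sum>x\<in>X. max (- f x) 0)" .
  show ?thesis using upper lower pos_neg abs_split by linarith
qed

lemma tv_dist_bounds:
  assumes "(\<Sum>x\<in>hamming_space n q. \<mu> x - \<nu> x) = 0"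
  shows "0 \<le> tv_dist n q \<mu> \<nu>"
    and "tv_dist n q \<mu> \<nu> \<le> (\<Sum>x\<in>hamming_space n q. \<bar>\<mu> x - \<nu> x\<bar>) / 2"
proof -
  define X where "X = hamming_space n q"
  define T where "T = (\<lambda>S. \<bar>sum \<mu> S - sum \<nu> S\<bar>) ` Pow X"
  have tv: "tv_dist n q \<mu> \<nu> = Max T" by (auto simp: tv_dist_def T_def X_def intro: arg_cong[where f = Max])
  have fin: "finite T" by (simp add: T_def X_def finite_hamming_space)
  have zero: "0 \<in> T" unfolding T_def by (rule image_eqI[of _ _ "{}"]) auto
  show "0 \<le> tv_dist n q \<mu> \<nu>" unfolding tv using Max_ge[OF fin zero] .
  have "t \<le> (\<Sum>x\<in>X. \<bar>\<mu> x - \<nu> x\<bar>) / 2" if "t \<in> T" for t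
  proof -
    obtain B where B: "B \<subseteq> X" and t: "t = \<bar>sum \<mu> B - sum \<nu> B\<bar>" using \<open>t \<in> T\<close> by (auto simp: T_def)
    have "t = \<bar>\<Sum>x\<in>B. \<mu> x - \<nu> x\<bar>" by (simp add: t sum_subtractf)
    also have "\<dots> \<le> (\<Sum>x\<in>X. \<bar>\<mu> x - \<nu> x\<bar>) / 2"
      by (rule abs_sum_subset_le_half_sum_abs[OF _ _ B]) (use assms in \<open>simp_all add: X_def finite_hamming_space\<close>)
    finally show ?thesis .
  qed
  then show "tv_dist n q \<mu> \<nu> \<le> (\<Sum>x\<in>hamming_space n q. \<bar>\<mu> x - \<nu> x\<bar>) / 2"
    unfolding tv using fin zero by (subst Max_le_iff) (auto simp: X_def)
qed

lemma square_sum_abs_le_card_mult_sum_squares: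
  fixes f :: "'a \<Rightarrow> real"
  shows "(\<Sum>x\<in>X. \<bar>f x\<bar>)\<^sup>2 \<le> real (card X) * (\<Sum>x\<in>X. (f x)\<^sup>2)"
  using Cauchy_Schwarz_ineq_sum[of "\<lambda>x. \<bar>f x\<bar>" "\<lambda>_. 1" X] by (simp add: mult.commute)

lemma exp_5_div_4_le_4: "exp (5/4::real) \<le> 4"
proof -
  have "1 + (-1/8) \<le> exp (-1/8::real)" by (rule exp_ge_add_one_self)
  then have "exp (1/8::real) \<le> 8/7" by (simp add: exp_minus field_simps)
  then have "exp (1/8::real) ^ 10 \<le> (8/7) ^ 10" by (rule power_mono) simp
  moreover have "exp (1/8::real) ^ 10 = exp (5/4)" using exp_of_nat_mult[of 10 "1/8::real"] by simp
  moreover have "(8/7::real) ^ 10 \<le> 4" by (simp add: power_divide)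
  ultimately show ?thesis by simp
qed

text \<open>For \<open>x > 1\<close> this is where \<open>q \<ge> 5\<close> is needed: at \<open>x = q / (q - 1)\<close> it reads
  \<open>1 / (q - 1) \<le> exp (- q / (q - 1))\<close>.\<close>
lemma abs_one_minus_le_exp_neg:
  fixes x :: real
  assumes q: "q \<ge> 5" and x0: "0 \<le> x" and x1: "x \<le> real q / (real q - 1)"
  shows "\<bar>1 - x\<bar> \<le> exp (- x)"
proof (cases "x \<le> 1")
  case True
  then show ?thesis using exp_ge_add_one_self[of "-x"] by simp
next
  case False
  have q1: "real q - 1 \<ge> 4" using q by simp
  have "real q / (real q - 1) \<le> 5/4" using q1 by (simp add: field_simps)
  then have "exp (real q / (real q - 1)) \<le> real q - 1"
    using exp_5_div_4_le_4 q1 by (smt (verit) exp_le_cancel_iff)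
  then have "1 / (real q - 1) \<le> exp (- (real q / (real q - 1)))"
    using q1 by (simp add: exp_minus field_simps)
  moreover have "x - 1 \<le> 1 / (real q - 1)" using x1 q1 by (simp add: field_simps)
  moreover have "exp (- (real q / (real q - 1))) \<le> exp (-x)" using x1 by simp
  moreover have "\<bar>1 - x\<bar> = x - 1" using False by simp
  ultimately show ?thesis by linarith
qed

lemma abs_eigenvalue_le_exp:
  assumes q: "q \<ge> 5" and n: "n \<ge> 1" and S: "S \<subseteq> {..<n}"
  shows "\<bar>eigenvalue n q S\<bar> \<le> exp (- (real q * real (n - card S) / (real n * (real q - 1))))"
  unfolding eigenvalue_def
proof (rule abs_one_minus_le_exp_neg[OF q])
  have "real (n - card S) \<le> real n" by simp
  then have "real q * real (n - card S) / (real n * (real q - 1)) \<le> real q * real n / (real n * (real q - 1))"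
    using q n by (intro divide_right_mono mult_left_mono) simp_all
  also have "\<dots> = real q / (real q - 1)" using n by simp
  finally show "real q * real (n - card S) / (real n * (real q - 1)) \<le> real q / (real q - 1)" .
qed (use q in simp)

lemma eigenvalue_power_square_le:
  assumes q: "q \<ge> 5" and n: "n \<ge> 1" and S: "S \<subseteq> {..<n}"
    and k: "real k = real n * (real q - 1) / (2 * real q) * (ln (real n * (real q - 1)) + c)"
  shows "(eigenvalue n q S ^ k)\<^sup>2 \<le> (exp (- c) / (real n * (real q - 1))) ^ (n - card S)"
proof -
  define t where "t = n - card S"
  define N where "N = real n * (real q - 1)"
  have N: "N > 0" using q n by (simp add: N_def)
  have "(eigenvalue n q S ^ k)\<^sup>2 = (\<bar>eigenvalue n q S\<bar> ^ k)\<^sup>2" by (simp add: power_abs[symmetric])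
  also have "\<dots> \<le> (exp (- (real q * real t / N)) ^ k)\<^sup>2"
    using abs_eigenvalue_le_exp[OF q n S] by (intro power_mono) (simp_all add: t_def N_def)
  also have "\<dots> = exp (- (real t * (ln N + c)))"
  proof -
    have "real k = N / (2 * real q) * (ln N + c)" using k by (simp add: N_def)
    then have "2 * real q * real k / N = ln N + c" using N q by (simp add: field_simps)
    moreover have "2 * (real k * (real q * real t / N)) = real t * (2 * real q * real k / N)"
      by (simp add: field_simps)
    ultimately have "2 * (real k * (real q * real t / N)) = real t * (ln N + c)" by simp
    then show ?thesis by (simp add: exp_of_nat_mult[symmetric] power2_eq_square exp_add[symmetric])
  qed
  also have "\<dots> = (exp (- c) / N) ^ t"
    using N exp_of_nat_mult[of t "ln N"]
    by (simp add: exp_of_nat_mult[symmetric] exp_diff exp_minus algebra_simps field_simps)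
  finally show ?thesis by (simp add: t_def N_def)
qed

lemma sum_proper_subsets_power:
  fixes a :: real
  shows "(\<Sum>S\<in>Pow {..<n} - {{..<n}}. a ^ (n - card S)) = (1 + a) ^ n - 1"
proof -
  have "(1 + a) ^ n = (\<Prod>i<n. 1 + a)" by simp
  also have "\<dots> = (\<Sum>S\<in>Pow {..<n}. (\<Prod>i\<in>S. 1) * (\<Prod>i\<in>{..<n}-S. a))"
    by (rule prod_add) simp
  also have "\<dots> = (\<Sum>S\<in>Pow {..<n}. a ^ (n - card S))"
    by (intro sum.cong refl) (auto simp: card_Diff_subset finite_subset)
  also have "\<dots> = 1 + (\<Sum>S\<in>Pow {..<n} - {{..<n}}. a ^ (n - card S))"
    by (simp add: sum.remove[of "Pow {..<n}" "{..<n}"])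
  finally show ?thesis by simp
qed

lemma weighted_eigenvalue_power_square_le:
  assumes q: "q \<ge> 5" and n: "n \<ge> 1" and S: "S \<subseteq> {..<n}"
    and k: "real k = real n * (real q - 1) / (2 * real q) * (ln (real n * (real q - 1)) + c)"
  shows "real q ^ n * ((eigenvalue n q S ^ k)\<^sup>2 * ((1 / real q) ^ card S * ((real q - 1) / real q) ^ (n - card S)))
    \<le> (exp (- c) / real n) ^ (n - card S)"
proof -
  define t where "t = n - card S"
  have "n = card S + t" using card_mono[OF _ S] by (simp add: t_def)
  then have "real q ^ n * ((1 / real q) ^ card S * ((real q - 1) / real q) ^ t) = (real q - 1) ^ t"
    using q by (simp add: power_add power_divide field_simps)
  then have "real q ^ n * ((eigenvalue n q S ^ k)\<^sup>2 * ((1 / real q) ^ card S * ((real q - 1) / real q) ^ t))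
      = (eigenvalue n q S ^ k)\<^sup>2 * (real q - 1) ^ t"
    by (simp add: mult_ac)
  also have "\<dots> \<le> (exp (- c) / (real n * (real q - 1))) ^ t * (real q - 1) ^ t"
    using eigenvalue_power_square_le[OF q n S k] q by (intro mult_right_mono) (simp_all add: t_def)
  also have "\<dots> = (exp (- c) / real n) ^ t"
    using q by (simp add: power_mult_distrib[symmetric])
  finally show ?thesis by (simp add: t_def)
qed

lemma card_mult_sum_square_nu_k_minus_unif_le:
  assumes q: "q \<ge> 5" and n: "n \<ge> 1"
    and k: "real k = real n * (real q - 1) / (2 * real q) * (ln (real n * (real q - 1)) + c)"
  shows "real q ^ n * (\<Sum>x\<in>hamming_space n q. (nu_k n q k x - unif n q x)\<^sup>2) \<le> exp (exp (- c)) - 1"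
proof -
  define P where "P = Pow {..<n} - {{..<n}}"
  define e where "e = exp (- c)"
  have q2: "q \<ge> 2" using q by simp
  have "(\<Sum>x\<in>hamming_space n q. (nu_k n q k x - unif n q x)\<^sup>2)
      = (\<Sum>x\<in>hamming_space n q. (\<Sum>S\<in>P. eigenvalue n q S ^ k * eigenfunction n q S x)\<^sup>2)"
    by (rule sum.cong) (simp_all add: P_def nu_k_minus_unif_eq_sum_eigenfunction[OF q2 n])
  also have "\<dots> = (\<Sum>S\<in>P. (eigenvalue n q S ^ k)\<^sup>2
      * ((1 / real q) ^ card S * ((real q - 1) / real q) ^ (n - card S)))"
    by (rule sum_square_sum_eigenfunction[OF q2]) (auto simp: P_def)
  finally have "real q ^ n * (\<Sum>x\<in>hamming_space n q. (nu_k n q k x - unif n q x)\<^sup>2)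
      = (\<Sum>S\<in>P. real q ^ n * ((eigenvalue n q S ^ k)\<^sup>2
          * ((1 / real q) ^ card S * ((real q - 1) / real q) ^ (n - card S))))"
    by (simp add: sum_distrib_left)
  also have "\<dots> \<le> (\<Sum>S\<in>P. (e / real n) ^ (n - card S))"
    by (rule sum_mono) (use weighted_eigenvalue_power_square_le[OF q n _ k] in \<open>auto simp: P_def e_def\<close>)
  also have "\<dots> = (1 + e / real n) ^ n - 1" unfolding P_def by (rule sum_proper_subsets_power)
  also have "(1 + e / real n) ^ n \<le> exp (e / real n) ^ n"
    by (rule power_mono) (use exp_ge_add_one_self[of "e / real n"] in \<open>simp_all add: e_def\<close>)
  also have "exp (e / real n) ^ n = exp e"
    using exp_of_nat_mult[of n "e / real n"] n by simp
  finally show ?thesis by (simp add: e_def)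
qed

theorem theorem1p1:
  fixes q n k :: nat and c :: real
  assumes "q \<ge> 5" and "n \<ge> 1" and "c > 0"
    and "real k = real n * (real q - 1) / (2 * real q) * (ln (real n * (real q - 1)) + c)"
  shows "(tv_dist n q (nu_k n q k) (unif n q))\<^sup>2 \<le> 1/4 * (exp (exp (- c)) - 1)"
proof -
  let ?X = "hamming_space n q" and ?f = "\<lambda>x. nu_k n q k x - unif n q x"
  have mass: "(\<Sum>x\<in>?X. ?f x) = 0" using assms(1,2) by (intro sum_nu_k_minus_unif) simp_all
  have "(tv_dist n q (nu_k n q k) (unif n q))\<^sup>2 \<le> ((\<Sum>x\<in>?X. \<bar>?f x\<bar>) / 2)\<^sup>2"
    using tv_dist_bounds[OF mass] by (rule power_mono[rotated])
  also have "\<dots> \<le> real q ^ n * (\<Sum>x\<in>?X. (?f x)\<^sup>2) / 4"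
    using square_sum_abs_le_card_mult_sum_squares[of ?f ?X]
    by (simp add: power_divide card_hamming_space)
  also have "\<dots> \<le> 1/4 * (exp (exp (- c)) - 1)"
    using card_mult_sum_square_nu_k_minus_unif_le[OF assms(1,2,4)] by simp
  finally show ?thesis .
qed

end
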